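(* Let $\gamma>0$, $\tau>3$, $\alpha\in D_{\gamma,\tau}$, and let $p_n/q_n$ be the convergents of $\alpha$; for even $n$ let $I_n:=\left(\frac{p_n}{q_n},\frac{p_{n+2}}{q_{n+2}}\right)$. Then there exists $N\in\mathbb{N}$ such that for all even $n>N$, $$\mu\left(\bigcup_{\frac{p}{q}\in I_n,\ q\ge q_{n+2}}\left(\frac{p}{q}-\frac{\gamma}{q^{\tau+1}},\ \frac{p}{q}+\frac{\gamma}{q^{\tau+1}}\right)\right)<\frac{2\gamma}{q_{n+2}^{\tau-1}},$$ where the union is over rationals $p/q$ ($p\in\mathbb{Z}$, $q\in\mathbb{N}$) and $\mu$ is Lebesgue measure.
   Context: For $x\in\mathbb{R}$, $\|x\|:=\min_{p\in\mathbb{Z}}|x-p|$; $\mathbb{N}=\{1,2,\dots\}$. For $\gamma>0,\tau\ge1$, $D_{\gamma,\tau}:=\{\alpha\in(0,1): \|q\alpha\|\ge\gamma/q^\tau\ \forall q\in\mathbb{N}\}$; its elements are irrational. For irrational $\alpha\in(0,1)$ write $\alpha=\cfrac{1}{a_1+\cfrac{1}{a_2+\cdots}}$, and let $p_n/q_n$ ($n\ge0$) be its convergents: $p_{-1}=1,q_{-1}=0,p_0=0,q_0=1$, $p_n=a_np_{n-1}+p_{n-2}$, $q_n=a_nq_{n-1}+q_{n-2}$. *)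

theory Defs
  imports "HOL-Analysis.Analysis"
begin

definition dist_int :: "real \<Rightarrow> real" where
  "dist_int x = (INF p::int. \<bar>x - of_int p\<bar>)"

definition D_set :: "real \<Rightarrow> real \<Rightarrow> real set" where
  "D_set \<gamma> \<tau> = {\<alpha>. 0 < \<alpha> \<and> \<alpha> < 1 \<and>
      (\<forall>q::nat. q \<ge> 1 \<longrightarrow> dist_int (real q * \<alpha>) \<ge> \<gamma> / real q powr \<tau>)}"

fun cf_rem :: "real \<Rightarrow> nat \<Rightarrow> real" where
  "cf_rem \<alpha> 0 = \<alpha>"
| "cf_rem \<alpha> (Suc k) = frac (1 / cf_rem \<alpha> k)"

text \<open>Partial quotients: alpha = 1/(a_1 + 1/(a_2 + ...)), a_n = floor(1/cf_rem alpha (n-1)) for n >= 1.\<close>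
definition cf_a :: "real \<Rightarrow> nat \<Rightarrow> int" where
  "cf_a \<alpha> n = \<lfloor>1 / cf_rem \<alpha> (n - 1)\<rfloor>"

text \<open>Shifted recursions: cf_P alpha k = p_(k-1), cf_Q alpha k = q_(k-1).\<close>
fun cf_P :: "real \<Rightarrow> nat \<Rightarrow> int" where
  "cf_P \<alpha> 0 = 1"
| "cf_P \<alpha> (Suc 0) = 0"
| "cf_P \<alpha> (Suc (Suc k)) = cf_a \<alpha> (Suc k) * cf_P \<alpha> (Suc k) + cf_P \<alpha> k"

fun cf_Q :: "real \<Rightarrow> nat \<Rightarrow> int" where
  "cf_Q \<alpha> 0 = 0"
| "cf_Q \<alpha> (Suc 0) = 1"
| "cf_Q \<alpha> (Suc (Suc k)) = cf_a \<alpha> (Suc k) * cf_Q \<alpha> (Suc k) + cf_Q \<alpha> k"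

definition conv_p :: "real \<Rightarrow> nat \<Rightarrow> int" where
  "conv_p \<alpha> n = cf_P \<alpha> (Suc n)"

definition conv_q :: "real \<Rightarrow> nat \<Rightarrow> int" where
  "conv_q \<alpha> n = cf_Q \<alpha> (Suc n)"

definition I_int :: "real \<Rightarrow> nat \<Rightarrow> real set" where
  "I_int \<alpha> n = {conv_p \<alpha> n / conv_q \<alpha> n <..< conv_p \<alpha> (n+2) / conv_q \<alpha> (n+2)}"

end

theory Submission
  imports Defs "HOL-Real_Asymp.Real_Asymp"
begin

(*
  Every rational p/q in I_n lies in (0,1), so for each denominator q there are at most q + 1
  of them, and the union has measure at most
    sum_(q >= Q) (q + 1) 2 gamma / q^(tau+1)  <=  4 gamma sum_(q >= Q) q^(-tau)
                                              <=  4 gamma (Q - 1)^(1-tau) / (tau - 1)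
  with Q = q_(n+2).  As tau > 3, the factor 2/(tau - 1) is below 1, so this is less than
  2 gamma / Q^(tau-1) once Q is large; and q_n >= n/2 because all partial quotients of alpha
  are at least 1.
*)

lemma powr_neg_le_diff_powr:
  fixes x \<tau> :: real
  assumes "1 < x" "1 < \<tau>"
  shows "x powr (-\<tau>) \<le> ((x - 1) powr (1 - \<tau>) - x powr (1 - \<tau>)) / (\<tau> - 1)"
proof -
  obtain z where z: "x - 1 < z" "z < x"
    and mvt: "x powr (1 - \<tau>) - (x - 1) powr (1 - \<tau>) = (x - (x - 1)) * ((1 - \<tau>) * z powr (1 - \<tau> - 1))"
  proof (rule MVT2[of "x - 1" x "\<lambda>z. z powr (1 - \<tau>)" "\<lambda>z. (1 - \<tau>) * z powr (1 - \<tau> - 1)", elim_format])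
    fix y assume "x - 1 \<le> y" "y \<le> x"
    then show "((\<lambda>z. z powr (1 - \<tau>)) has_real_derivative (1 - \<tau>) * y powr (1 - \<tau> - 1)) (at y)"
      using assms has_real_derivative_powr[of y "1 - \<tau>"] by simp
  qed auto
  have "x powr (-\<tau>) \<le> z powr (-\<tau>)"
    using assms z by (intro powr_mono2') auto
  also have "\<dots> = ((x - 1) powr (1 - \<tau>) - x powr (1 - \<tau>)) / (\<tau> - 1)"
    using mvt assms by (simp add: field_simps)
  finally show ?thesis .
qed

lemma sum_powr_neg_le:
  fixes \<tau> :: real and Q M :: nat
  assumes "1 < Q" "1 < \<tau>"
  shows "(\<Sum>q=Q..M. real q powr (-\<tau>)) \<le> (real Q - 1) powr (1 - \<tau>) / (\<tau> - 1)"
proof (cases "Q \<le> M")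
  case False
  then show ?thesis using assms by simp
next
  case True
  then have "(\<Sum>q=Q..M. real q powr (-\<tau>))
      \<le> ((real Q - 1) powr (1 - \<tau>) - real M powr (1 - \<tau>)) / (\<tau> - 1)"
  proof (induction M rule: dec_induct)
    case base
    then show ?case using assms powr_neg_le_diff_powr[of "real Q" \<tau>] by simp
  next
    case (step m)
    have "(\<Sum>q=Q..Suc m. real q powr (-\<tau>)) = (\<Sum>q=Q..m. real q powr (-\<tau>)) + real (Suc m) powr (-\<tau>)"
      using step.hyps by simp
    also have "\<dots> \<le> ((real Q - 1) powr (1 - \<tau>) - real m powr (1 - \<tau>)) / (\<tau> - 1)
        + (real m powr (1 - \<tau>) - real (Suc m) powr (1 - \<tau>)) / (\<tau> - 1)"
      using step assms powr_neg_le_diff_powr[of "real (Suc m)" \<tau>] by simp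
    also have "\<dots> = ((real Q - 1) powr (1 - \<tau>) - real (Suc m) powr (1 - \<tau>)) / (\<tau> - 1)"
      by (simp add: diff_divide_distrib)
    finally show ?case .
  qed
  also have "\<dots> \<le> (real Q - 1) powr (1 - \<tau>) / (\<tau> - 1)"
    using assms by (intro divide_right_mono) auto
  finally show ?thesis .
qed

definition rat_nbhd :: "real \<Rightarrow> real \<Rightarrow> int \<Rightarrow> nat \<Rightarrow> real set" where
  "rat_nbhd \<gamma> \<tau> p q = {real_of_int p / real q - \<gamma> / real q powr (\<tau> + 1) <..<
                         real_of_int p / real q + \<gamma> / real q powr (\<tau> + 1)}"

lemma rat_nbhd_fmeasurable: "rat_nbhd \<gamma> \<tau> p q \<in> fmeasurable lborel"
proof (rule fmeasurableI)
  show "emeasure lborel (rat_nbhd \<gamma> \<tau> p q) < \<infinity>"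
    unfolding rat_nbhd_def by (cases "\<gamma> / real q powr (\<tau> + 1) \<ge> 0") auto
qed (simp add: rat_nbhd_def)

lemma measure_rat_nbhd:
  assumes "0 \<le> \<gamma>"
  shows "measure lborel (rat_nbhd \<gamma> \<tau> p q) = 2 * \<gamma> / real q powr (\<tau> + 1)"
  using assms by (simp add: rat_nbhd_def)

definition denom_nbhds :: "real \<Rightarrow> real \<Rightarrow> nat \<Rightarrow> real set" where
  "denom_nbhds \<gamma> \<tau> q = (\<Union>p\<in>{0..int q}. rat_nbhd \<gamma> \<tau> p q)"

lemma denom_nbhds_fmeasurable: "denom_nbhds \<gamma> \<tau> q \<in> fmeasurable lborel"
  unfolding denom_nbhds_def by (intro fmeasurable.finite_UN rat_nbhd_fmeasurable) auto

lemma measure_denom_nbhds_le: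
  assumes "0 \<le> \<gamma>" "1 \<le> q"
  shows "measure lborel (denom_nbhds \<gamma> \<tau> q) \<le> 4 * \<gamma> * real q powr (-\<tau>)"
proof -
  have q: "0 < real q" using assms by simp
  have "measure lborel (denom_nbhds \<gamma> \<tau> q) \<le> (\<Sum>p\<in>{0..int q}. measure lborel (rat_nbhd \<gamma> \<tau> p q))"
    unfolding denom_nbhds_def by (intro measure_UNION_le) (auto simp: rat_nbhd_def)
  also have "\<dots> = real (q + 1) * (2 * \<gamma> / real q powr (\<tau> + 1))"
    using assms by (simp add: measure_rat_nbhd)
  also have "\<dots> = (2 * \<gamma> / real q powr \<tau>) * ((real q + 1) / real q)"
    using q by (simp add: powr_add field_simps)
  also have "\<dots> \<le> (2 * \<gamma> / real q powr \<tau>) * 2"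
    using assms q by (intro mult_left_mono) (auto simp: field_simps)
  also have "\<dots> = 4 * \<gamma> * real q powr (-\<tau>)"
    by (simp add: powr_minus field_simps)
  finally show ?thesis .
qed

lemma measure_UN_denom_nbhds_le:
  assumes "0 \<le> \<gamma>" "1 < \<tau>" "1 < Q" "I \<subseteq> {Q..}" "finite I"
  shows "measure lborel (\<Union>q\<in>I. denom_nbhds \<gamma> \<tau> q) \<le> 4 * \<gamma> * (real Q - 1) powr (1 - \<tau>) / (\<tau> - 1)"
proof -
  have "measure lborel (\<Union>q\<in>I. denom_nbhds \<gamma> \<tau> q) \<le> (\<Sum>q\<in>I. measure lborel (denom_nbhds \<gamma> \<tau> q))"
    using denom_nbhds_fmeasurable assms by (intro measure_UNION_le) (auto simp: fmeasurable_def)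
  also have "\<dots> \<le> (\<Sum>q\<in>I. 4 * \<gamma> * real q powr (-\<tau>))"
    using assms by (intro sum_mono measure_denom_nbhds_le) auto
  also have "\<dots> \<le> (\<Sum>q=Q..Max (insert Q I). 4 * \<gamma> * real q powr (-\<tau>))"
    using assms by (intro sum_mono2) auto
  also have "\<dots> \<le> 4 * \<gamma> * ((real Q - 1) powr (1 - \<tau>) / (\<tau> - 1))"
    unfolding sum_distrib_left[symmetric] using assms by (intro mult_left_mono sum_powr_neg_le) auto
  finally show ?thesis by simp
qed

lemma measure_UN_rat_nbhds_le:
  fixes S :: "(int \<times> nat) set"
  assumes "0 \<le> \<gamma>" "1 < \<tau>" "1 < Q"
    and S: "\<And>p q. (p, q) \<in> S \<Longrightarrow> real_of_int p / real q \<in> {0..1} \<and> Q \<le> q"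
  shows "measure lborel (\<Union>(p, q)\<in>S. rat_nbhd \<gamma> \<tau> p q) \<le> 4 * \<gamma> * (real Q - 1) powr (1 - \<tau>) / (\<tau> - 1)"
proof -
  note finite_bound = measure_UN_denom_nbhds_le[OF assms(1-3)]
  have "open (rat_nbhd \<gamma> \<tau> p q)" for p q
    by (simp add: rat_nbhd_def)
  then have S_sets: "(\<Union>(p, q)\<in>S. rat_nbhd \<gamma> \<tau> p q) \<in> sets lborel"
    unfolding sets_lborel by (intro borel_open open_UN) (simp add: split_beta)
  have "(\<Union>(p, q)\<in>S. rat_nbhd \<gamma> \<tau> p q) \<subseteq> (\<Union>q\<in>{Q..}. denom_nbhds \<gamma> \<tau> q)"
  proof (rule UN_least)
    fix i assume "i \<in> S"
    then obtain p q where i: "i = (p, q)" and pq: "real_of_int p / real q \<in> {0..1}" and q: "q \<in> {Q..}"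
      using S by (cases i) auto
    then have "0 < real q"
      using assms(3) by simp
    with pq have "p \<in> {0..int q}"
      by (simp add: zero_le_divide_iff divide_le_eq_1)
    with q show "(case i of (p, q) \<Rightarrow> rat_nbhd \<gamma> \<tau> p q) \<subseteq> (\<Union>q\<in>{Q..}. denom_nbhds \<gamma> \<tau> q)"
      unfolding denom_nbhds_def i by blast
  qed
  moreover have "(\<Union>q\<in>{Q..}. denom_nbhds \<gamma> \<tau> q) \<in> fmeasurable lborel"
    by (rule fmeasurable_UN_bound[OF countableI_type denom_nbhds_fmeasurable finite_bound])
  ultimately have "measure lborel (\<Union>(p, q)\<in>S. rat_nbhd \<gamma> \<tau> p q)
      \<le> measure lborel (\<Union>q\<in>{Q..}. denom_nbhds \<gamma> \<tau> q)"
    by (rule measure_mono_fmeasurable[OF _ S_sets])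
  also have "\<dots> \<le> 4 * \<gamma> * (real Q - 1) powr (1 - \<tau>) / (\<tau> - 1)"
    by (rule measure_UN_bound[OF countableI_type denom_nbhds_fmeasurable finite_bound])
  finally show ?thesis .
qed

lemma eventually_tail_bound_less:
  fixes \<gamma> \<tau> :: real
  assumes "0 < \<gamma>" "3 < \<tau>"
  shows "\<forall>\<^sub>F x in at_top. 4 * \<gamma> * (x - 1) powr (1 - \<tau>) / (\<tau> - 1) < 2 * \<gamma> / x powr (\<tau> - 1)"
proof -
  have "((\<lambda>x. (x - 1) powr (1 - \<tau>) / x powr (1 - \<tau>)) \<longlongrightarrow> 1) at_top"
    by real_asymp
  moreover have "1 < (\<tau> - 1) / 2"
    using assms by simp
  ultimately have "\<forall>\<^sub>F x in at_top. (x - 1) powr (1 - \<tau>) / x powr (1 - \<tau>) < (\<tau> - 1) / 2"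
    by (rule order_tendstoD)
  then show ?thesis
    using eventually_gt_at_top[of 1]
  proof eventually_elim
    case (elim x)
    then have "2 * (x - 1) powr (1 - \<tau>) / (\<tau> - 1) < x powr (1 - \<tau>)"
      using assms by (simp add: divide_less_eq mult.commute)
    then have "2 * \<gamma> * (2 * (x - 1) powr (1 - \<tau>) / (\<tau> - 1)) < 2 * \<gamma> * x powr (1 - \<tau>)"
      using assms by (intro mult_strict_left_mono) auto
    moreover have "x powr (1 - \<tau>) = 1 / x powr (\<tau> - 1)"
      using powr_minus_divide[of x "\<tau> - 1"] by simp
    ultimately show ?case
      by simp
  qed
qed

lemma D_set_not_Rats:
  assumes "0 < \<gamma>" "\<alpha> \<in> D_set \<gamma> \<tau>"
  shows "\<alpha> \<notin> \<rat>"
proof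
  assume "\<alpha> \<in> \<rat>"
  then obtain a b :: int where "0 < b" and \<alpha>: "\<alpha> = of_int a / of_int b"
    by (auto elim: Rats_cases')
  then have q: "1 \<le> nat b" "real (nat b) * \<alpha> = of_int a"
    by auto
  have "dist_int (real (nat b) * \<alpha>) \<le> 0"
    unfolding dist_int_def q(2) by (rule cINF_lower2[where x = a]) (auto intro: bdd_belowI[of _ 0])
  moreover have "\<gamma> / real (nat b) powr \<tau> \<le> dist_int (real (nat b) * \<alpha>)"
    using assms(2) q(1) by (auto simp: D_set_def)
  moreover have "0 < \<gamma> / real (nat b) powr \<tau>"
    using assms(1) q(1) by simp
  ultimately show False by linarith
qed

lemma cf_rem_bounds:
  assumes "\<alpha> \<notin> \<rat>" "0 < \<alpha>" "\<alpha> < 1"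
  shows "cf_rem \<alpha> k \<notin> \<rat> \<and> 0 < cf_rem \<alpha> k \<and> cf_rem \<alpha> k < 1"
proof (induction k)
  case 0
  then show ?case using assms by simp
next
  case (Suc k)
  define x where "x = cf_rem \<alpha> k"
  have "1 / x \<notin> \<rat>"
  proof
    assume "1 / x \<in> \<rat>"
    then have "1 / (1 / x) \<in> \<rat>"
      by (rule Rats_divide[OF Rats_1])
    then show False
      using Suc by (simp add: x_def)
  qed
  then have irrational: "frac (1 / x) \<notin> \<rat>"
    by (simp add: frac_in_Rats_iff)
  then have "frac (1 / x) \<noteq> 0"
    by (metis Rats_0)
  then have "0 < frac (1 / x)"
    using frac_ge_0[of "1 / x"] by linarith
  then show ?case
    using irrational frac_lt_1[of "1 / x"] by (simp add: x_def)
qed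

lemma cf_a_ge_1:
  assumes "\<alpha> \<notin> \<rat>" "0 < \<alpha>" "\<alpha> < 1"
  shows "1 \<le> cf_a \<alpha> k"
proof -
  have "0 < cf_rem \<alpha> (k - 1)" "cf_rem \<alpha> (k - 1) < 1"
    using cf_rem_bounds[OF assms] by auto
  then have "1 \<le> 1 / cf_rem \<alpha> (k - 1)"
    by simp
  then show ?thesis
    unfolding cf_a_def by linarith
qed

lemma conv_p_rec:
  "conv_p \<alpha> 0 = 0"
  "conv_p \<alpha> (Suc 0) = 1"
  "conv_p \<alpha> (Suc (Suc n)) = cf_a \<alpha> (Suc (Suc n)) * conv_p \<alpha> (Suc n) + conv_p \<alpha> n"
  by (simp_all add: conv_p_def)

lemma conv_q_rec:
  "conv_q \<alpha> 0 = 1"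
  "conv_q \<alpha> (Suc 0) = cf_a \<alpha> 1"
  "conv_q \<alpha> (Suc (Suc n)) = cf_a \<alpha> (Suc (Suc n)) * conv_q \<alpha> (Suc n) + conv_q \<alpha> n"
  by (simp_all add: conv_q_def)

lemma conv_q_gt_half:
  assumes "\<And>k. 1 \<le> cf_a \<alpha> k"
  shows "int (n div 2) < conv_q \<alpha> n"
proof (induction n rule: induct_nat_012)
  fix n
  assume IH: "int (n div 2) < conv_q \<alpha> n" "int (Suc n div 2) < conv_q \<alpha> (Suc n)"
  have "1 \<le> conv_q \<alpha> (Suc n)"
    using IH(2) by linarith
  then have "1 * 1 \<le> cf_a \<alpha> (Suc (Suc n)) * conv_q \<alpha> (Suc n)"
    using assms[of "Suc (Suc n)"] by (intro mult_mono) auto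
  then show "int (Suc (Suc n) div 2) < conv_q \<alpha> (Suc (Suc n))"
    using IH(1) by (simp add: conv_q_rec)
qed (use assms[of 1] in \<open>simp_all add: conv_q_rec\<close>)

lemma conv_p_bounds:
  assumes "\<And>k. 1 \<le> cf_a \<alpha> k"
  shows "0 \<le> conv_p \<alpha> n \<and> conv_p \<alpha> n \<le> conv_q \<alpha> n"
proof (induction n rule: induct_nat_012)
  fix n
  assume IH: "0 \<le> conv_p \<alpha> n \<and> conv_p \<alpha> n \<le> conv_q \<alpha> n"
    "0 \<le> conv_p \<alpha> (Suc n) \<and> conv_p \<alpha> (Suc n) \<le> conv_q \<alpha> (Suc n)"
  have a: "0 \<le> cf_a \<alpha> (Suc (Suc n))"
    using assms[of "Suc (Suc n)"] by simp
  then have "cf_a \<alpha> (Suc (Suc n)) * conv_p \<alpha> (Suc n) \<le> cf_a \<alpha> (Suc (Suc n)) * conv_q \<alpha> (Suc n)"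
    using IH(2) by (intro mult_left_mono) auto
  then show "0 \<le> conv_p \<alpha> (Suc (Suc n)) \<and> conv_p \<alpha> (Suc (Suc n)) \<le> conv_q \<alpha> (Suc (Suc n))"
    using IH a by (simp add: conv_p_rec conv_q_rec)
qed (use assms[of 1] in \<open>simp_all add: conv_p_rec conv_q_rec\<close>)

lemma I_int_subset_unit_interval:
  assumes "\<And>k. 1 \<le> cf_a \<alpha> k"
  shows "I_int \<alpha> n \<subseteq> {0<..<1}"
proof -
  have q: "0 < real_of_int (conv_q \<alpha> m)" for m
    using conv_q_gt_half[OF assms, of m] by linarith
  have "0 \<le> real_of_int (conv_p \<alpha> n) / real_of_int (conv_q \<alpha> n)"
    using conv_p_bounds[OF assms, of n] q[of n] by simp
  moreover have "real_of_int (conv_p \<alpha> (n + 2)) / real_of_int (conv_q \<alpha> (n + 2)) \<le> 1"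
    using conv_p_bounds[OF assms, of "n + 2"] q[of "n + 2"] by simp
  ultimately show ?thesis
    unfolding I_int_def by auto
qed

lemma measure_UN_rat_nbhds_I_int_le:
  fixes Q :: int
  assumes "\<And>k. 1 \<le> cf_a \<alpha> k" "0 \<le> \<gamma>" "1 < \<tau>" "2 \<le> Q"
  shows "measure lborel
      (\<Union>(p, q) \<in> {(p, q). 1 \<le> q \<and> real_of_int p / real q \<in> I_int \<alpha> n \<and> Q \<le> int q}. rat_nbhd \<gamma> \<tau> p q)
    \<le> 4 * \<gamma> * (real_of_int Q - 1) powr (1 - \<tau>) / (\<tau> - 1)"
proof -
  have Q: "real_of_int Q = real (nat Q)"
    using assms(4) by simp
  show ?thesis
    unfolding Q using assms I_int_subset_unit_interval[OF assms(1), of n]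
    by (intro measure_UN_rat_nbhds_le) auto
qed

lemma filterlim_conv_q:
  assumes "\<And>k. 1 \<le> cf_a \<alpha> k"
  shows "filterlim (\<lambda>n. real_of_int (conv_q \<alpha> n)) at_top sequentially"
proof (rule filterlim_at_top_mono)
  show "filterlim (\<lambda>n::nat. real n / 2 - 1) at_top sequentially"
    by real_asymp
  show "\<forall>\<^sub>F n in sequentially. real n / 2 - 1 \<le> real_of_int (conv_q \<alpha> n)"
  proof (rule always_eventually, rule allI)
    fix n
    have "real n / 2 - 1 \<le> real (n div 2)"
      by linarith
    also have "\<dots> \<le> real_of_int (conv_q \<alpha> n)"
      using conv_q_gt_half[OF assms, of n] by linarith
    finally show "real n / 2 - 1 \<le> real_of_int (conv_q \<alpha> n)" .
  qed
qed

theorem lemma3: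
  fixes \<gamma> \<tau> \<alpha> :: real
  assumes "\<gamma> > 0" and "\<tau> > 3" and "\<alpha> \<in> D_set \<gamma> \<tau>"
  shows "\<exists>N::nat. \<forall>n::nat. even n \<and> n > N \<longrightarrow>
     measure lborel
       (\<Union>(p, q) \<in> {(p::int, q::nat). q \<ge> 1 \<and> real_of_int p / real q \<in> I_int \<alpha> n
                          \<and> int q \<ge> conv_q \<alpha> (n+2)}.
          {real_of_int p / real q - \<gamma> / real q powr (\<tau> + 1) <..<
           real_of_int p / real q + \<gamma> / real q powr (\<tau> + 1)})
     < 2 * \<gamma> / real_of_int (conv_q \<alpha> (n+2)) powr (\<tau> - 1)"
proof -
  have "0 < \<alpha>" "\<alpha> < 1"
    using assms(3) unfolding D_set_def by blast+
  then have a_ge_1: "1 \<le> cf_a \<alpha> k" for k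
    using cf_a_ge_1 D_set_not_Rats[OF assms(1,3)] by blast
  have "\<forall>\<^sub>F x in at_top. 2 \<le> x \<and> 4 * \<gamma> * (x - 1) powr (1 - \<tau>) / (\<tau> - 1) < 2 * \<gamma> / x powr (\<tau> - 1)"
    using eventually_ge_at_top eventually_tail_bound_less[OF assms(1,2)] by (rule eventually_conj)
  from eventually_compose_filterlim[OF this filterlim_conv_q[OF a_ge_1]]
  obtain N where N: "\<And>m. N \<le> m \<Longrightarrow> 2 \<le> real_of_int (conv_q \<alpha> m) \<and>
      4 * \<gamma> * (real_of_int (conv_q \<alpha> m) - 1) powr (1 - \<tau>) / (\<tau> - 1) < 2 * \<gamma> / real_of_int (conv_q \<alpha> m) powr (\<tau> - 1)"
    unfolding eventually_sequentially by blast
  show ?thesis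
    unfolding rat_nbhd_def[symmetric]
  proof (intro exI[of _ N] allI impI order.strict_trans1[OF measure_UN_rat_nbhds_I_int_le[OF a_ge_1]])
    fix n assume "even n \<and> N < n"
    then show "2 \<le> conv_q \<alpha> (n + 2)"
      "4 * \<gamma> * (real_of_int (conv_q \<alpha> (n + 2)) - 1) powr (1 - \<tau>) / (\<tau> - 1)
        < 2 * \<gamma> / real_of_int (conv_q \<alpha> (n + 2)) powr (\<tau> - 1)"
      using N[of "n + 2"] by auto
  qed (use assms in auto)
qed

end
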